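(* Let $G=\langle c,s\rangle$, $K$, $z$, $b^{(i)}$ and $\phi:H\to G$ be as in the context. Let $w=s^{\alpha_0}c^{\beta_1}s^{\alpha_1}c^{\beta_2}\cdots s^{\alpha_{n-1}}c^{\beta_n}s^{\alpha_n}$, where $n\ge1$, $\alpha_0,\ldots,\alpha_n,\beta_1,\ldots,\beta_n$ are integers, all nonzero except possibly $\alpha_0$ and $\alpha_n$. Put $\gamma=\sum_{i=0}^{n}\alpha_i$, $\gamma_j=\sum_{i=0}^{j-1}\alpha_i$ for $j=1,\ldots,n$, $B_i=\{j:\gamma_j=\gamma_i\}$, $\gamma_0=\max\{|\gamma_1|,\ldots,|\gamma_n|\}$, and $F=(c^{s^{\gamma_1}})^{\beta_1}\cdots(c^{s^{\gamma_n}})^{\beta_n}\in K^{\langle s\rangle}$, regarded as a function $\langle s\rangle\to K$. Then $w\in\phi(H)$ if and only if $\gamma=0$, $\sum_{j\in B_i}\beta_j=0$ for $i=1,\ldots,n$, $F(s^{\mu})=1$ for all integers $\mu\ne1$ with $|\mu|\le3\gamma_0$, and $F(s)\in\langle [z,b^{(i)}]\ :\ i\in\mathbb{N}\rangle$.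
   Context: Notation: $x^y=yxy^{-1}$, $[x,y]=xyx^{-1}y^{-1}$. For groups $A,B$, the wreath product $A\,\mathrm{Wr}\,B$ is the semidirect product $A^B\rtimes B$, where $A^B$ is the group of all functions $B\to A$ with pointwise multiplication and $B$ acts by $(bf)(x)=f(xb)$, written $f^b=bfb^{-1}$. $H$ is a group generated by a countable set $\{a^{(1)},a^{(2)},\ldots\}$. Let $Z=\langle z\rangle$ be infinite cyclic and $b^{(i)}\in H^Z$ with $b^{(i)}(z^k)=a^{(i)}$ if $k>0$ and $1$ otherwise; $K=\langle z,b^{(i)}\ (i\in\mathbb{N})\rangle\le H\,\mathrm{Wr}\,Z$. Let $\langle s\rangle$ be infinite cyclic and $c\in K^{\langle s\rangle}$ with $c(s)=z$, $c(s^{2^i})=b^{(i)}$ for $i>0$, $c(s^k)=1$ otherwise; $G=\langle c,s\rangle\le K\,\mathrm{Wr}\,\langle s\rangle$. The map $\phi:H\to G$, $a^{(i)}\mapsto[c,c^{s^{2^i-1}}]$, is an injective homomorphism. *)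

theory Defs
  imports "HOL-Algebra.Algebra"
begin

text \<open>Conventions: conjugation x^y = y x y^{-1}, commutator [x,y] = x y x^{-1} y^{-1}.\<close>

definition conjW :: "('a,'b) monoid_scheme \<Rightarrow> 'a \<Rightarrow> 'a \<Rightarrow> 'a" where
  "conjW G x y = y \<otimes>\<^bsub>G\<^esub> x \<otimes>\<^bsub>G\<^esub> inv\<^bsub>G\<^esub> y"

definition commW :: "('a,'b) monoid_scheme \<Rightarrow> 'a \<Rightarrow> 'a \<Rightarrow> 'a" where
  "commW G x y = x \<otimes>\<^bsub>G\<^esub> y \<otimes>\<^bsub>G\<^esub> inv\<^bsub>G\<^esub> x \<otimes>\<^bsub>G\<^esub> inv\<^bsub>G\<^esub> y"

text \<open>Wreath product A Wr Z with Z infinite cyclic, Z identified with int (z^k ~ k).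
  A pair (f,k) stands for the product f z^k, where f is a function Z -> A (all functions,
  unrestricted direct product). Z acts by (z^k f)(z^m) = f(z^(m+k)), f^(z^k) = z^k f z^-k, so
  (f1 z^k1)(f2 z^k2) = (f1 . f2^(z^k1)) z^(k1+k2).\<close>

definition wr_Z :: "('a,'b) monoid_scheme \<Rightarrow> ((int \<Rightarrow> 'a) \<times> int) monoid" where
  "wr_Z A = \<lparr>carrier = {(f,k). \<forall>m. f m \<in> carrier A},
     monoid.mult = (\<lambda>(f1,k1) (f2,k2). (\<lambda>m. f1 m \<otimes>\<^bsub>A\<^esub> f2 (m + k1), k1 + k2)),
     one = (\<lambda>_. \<one>\<^bsub>A\<^esub>, 0)\<rparr>"

definition zW :: "('a,'b) monoid_scheme \<Rightarrow> (int \<Rightarrow> 'a) \<times> int" where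
  "zW A = (\<lambda>_. \<one>\<^bsub>A\<^esub>, 1)"

definition bW :: "('a,'b) monoid_scheme \<Rightarrow> (nat \<Rightarrow> 'a) \<Rightarrow> nat \<Rightarrow> (int \<Rightarrow> 'a) \<times> int" where
  "bW A a i = (\<lambda>k. if k > 0 then a i else \<one>\<^bsub>A\<^esub>, 0)"

definition KK :: "('a,'b) monoid_scheme \<Rightarrow> (nat \<Rightarrow> 'a) \<Rightarrow> ((int \<Rightarrow> 'a) \<times> int) monoid" where
  "KK A a = (wr_Z A)\<lparr>carrier := generate (wr_Z A) (insert (zW A) {bW A a i | i. i \<ge> 1})\<rparr>"

definition cW :: "('a,'b) monoid_scheme \<Rightarrow> (nat \<Rightarrow> 'a) \<Rightarrow> (int \<Rightarrow> (int \<Rightarrow> 'a) \<times> int) \<times> int" where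
  "cW A a = (\<lambda>k. if k = 1 then zW A
                 else if (\<exists>i::nat. i \<ge> 1 \<and> k = 2 ^ i) then bW A a (THE i. i \<ge> 1 \<and> k = 2 ^ i)
                 else \<one>\<^bsub>KK A a\<^esub>, 0)"

definition sW :: "('a,'b) monoid_scheme \<Rightarrow> (nat \<Rightarrow> 'a) \<Rightarrow> (int \<Rightarrow> (int \<Rightarrow> 'a) \<times> int) \<times> int" where
  "sW A a = (\<lambda>_. \<one>\<^bsub>KK A a\<^esub>, 1)"

definition GG :: "('a,'b) monoid_scheme \<Rightarrow> (nat \<Rightarrow> 'a)
    \<Rightarrow> ((int \<Rightarrow> (int \<Rightarrow> 'a) \<times> int) \<times> int) monoid" where
  "GG A a = (wr_Z (KK A a))\<lparr>carrier := generate (wr_Z (KK A a)) {cW A a, sW A a}\<rparr>"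

definition wordW :: "('a,'b) monoid_scheme \<Rightarrow> (nat \<Rightarrow> 'a) \<Rightarrow> nat \<Rightarrow> (nat \<Rightarrow> int) \<Rightarrow> (nat \<Rightarrow> int)
    \<Rightarrow> (int \<Rightarrow> (int \<Rightarrow> 'a) \<times> int) \<times> int" where
  "wordW A a n alpha beta =
     sW A a [^]\<^bsub>GG A a\<^esub> alpha 0 \<otimes>\<^bsub>GG A a\<^esub>
     foldr (\<lambda>j acc. cW A a [^]\<^bsub>GG A a\<^esub> beta j \<otimes>\<^bsub>GG A a\<^esub>
                     (sW A a [^]\<^bsub>GG A a\<^esub> alpha j \<otimes>\<^bsub>GG A a\<^esub> acc))
           [1..<n+1] \<one>\<^bsub>GG A a\<^esub>"

definition gammaW :: "(nat \<Rightarrow> int) \<Rightarrow> nat \<Rightarrow> int" where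
  "gammaW alpha j = (\<Sum>i<j. alpha i)"

definition FW :: "('a,'b) monoid_scheme \<Rightarrow> (nat \<Rightarrow> 'a) \<Rightarrow> nat \<Rightarrow> (nat \<Rightarrow> int) \<Rightarrow> (nat \<Rightarrow> int)
    \<Rightarrow> (int \<Rightarrow> (int \<Rightarrow> 'a) \<times> int) \<times> int" where
  "FW A a n alpha beta =
     foldr (\<lambda>j acc. (conjW (GG A a) (cW A a) (sW A a [^]\<^bsub>GG A a\<^esub> gammaW alpha j))
                        [^]\<^bsub>GG A a\<^esub> beta j \<otimes>\<^bsub>GG A a\<^esub> acc)
           [1..<n+1] \<one>\<^bsub>GG A a\<^esub>"

end

theory Submission
  imports Defs
begin

text \<open>An element of \<open>K Wr \<langle>s\<rangle>\<close> is a pair \<open>(F, \<gamma>)\<close> with \<open>F : \<int> \<rightarrow> K\<close>, and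
  \<open>w = (F, \<gamma>)\<close> with \<open>F(\<mu>) = \<Prod>\<^sub>j c(\<mu> + \<gamma>\<^sub>j)\<^bsup>\<beta>\<^sub>j\<^esup>\<close>. As \<open>c\<close> is supported on \<open>1\<close> and
  the powers of two, and \<open>2\<^sup>j + 2\<^sup>i - 1\<close> is never a power of two, the commutator
  \<open>[c, c\<^bsup>s^(2^i - 1)\<^esup>]\<close> is supported at \<open>1\<close> with value \<open>[z, b\<^bsup>(i)\<^esup>]\<close>. Hence \<open>\<phi>(H)\<close> consists
  of the pairs \<open>(F, 0)\<close> with \<open>F\<close> supported at \<open>1\<close> and \<open>F(1)\<close> in the subgroup generated by
  these commutators. The exponent of \<open>z\<close> is a homomorphism \<open>K \<rightarrow> \<int>\<close> killing that subgroup,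
  and at \<open>F(1 - \<gamma>\<^sub>i)\<close> it equals the block sum over \<open>B\<^sub>i\<close>, so the block sums vanish.
  Conversely, for \<open>|\<mu>| > 3\<gamma>\<^sub>0\<close> at most one power of two \<open>2\<^sup>k\<close> lies within \<open>\<gamma>\<^sub>0\<close> of \<open>\<mu>\<close>, so
  \<open>F(\<mu>)\<close> is \<open>b\<^bsup>(k)\<^esup>\<close> raised to a block sum, which is trivial.\<close>

lemma (in group) conjW_subgroup:
  assumes "subgroup S G" "x \<in> S" "y \<in> S"
  shows "conjW (G\<lparr>carrier := S\<rparr>) x y = conjW G x y"
  using assms by (simp add: conjW_def)

lemma (in group) commW_subgroup:
  assumes "subgroup S G" "x \<in> S" "y \<in> S"
  shows "commW (G\<lparr>carrier := S\<rparr>) x y = commW G x y"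
  using assms by (simp add: commW_def)

lemma (in group) foldr_int_pow_closed:
  "(\<And>j. f j \<in> carrier G) \<Longrightarrow> foldr (\<lambda>j acc. f j [^] (b j :: int) \<otimes> acc) L \<one> \<in> carrier G"
  by (induction L) auto

lemma (in group) foldr_int_pow_single:
  assumes "x \<in> carrier G"
  shows "foldr (\<lambda>j acc. (if P j then x else \<one>) [^] b j \<otimes> acc) L \<one>
       = x [^] (\<Sum>j\<leftarrow>L. if P j then b j else (0::int))"
  by (induction L) (simp_all add: assms int_pow_mult)

lemma (in group) integer_hom_foldr_int_pow:
  assumes h: "h \<in> hom G integer_group" and f: "\<And>j. f j \<in> carrier G"
  shows "h (foldr (\<lambda>j acc. f j [^] b j \<otimes> acc) L \<one>) = (\<Sum>j\<leftarrow>L. b j * h (f j))"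
proof -
  interpret h: group_hom G integer_group h
    using h by (simp add: group_hom_def group_hom_axioms_def is_group)
  show ?thesis
  proof (induction L)
    case (Cons j L)
    have "h (f j [^] b j \<otimes> foldr (\<lambda>j acc. f j [^] b j \<otimes> acc) L \<one>)
        = h (f j [^] b j) + h (foldr (\<lambda>j acc. f j [^] b j \<otimes> acc) L \<one>)"
      using h.hom_mult[OF int_pow_closed[OF f] foldr_int_pow_closed[OF f]] by simp
    with Cons.IH show ?case by (simp add: f h.hom_int_pow)
  qed simp
qed

lemma (in group) commW_one_left: "y \<in> carrier G \<Longrightarrow> commW G \<one> y = \<one>"
  by (simp add: commW_def)

lemma (in group) commW_one_right: "x \<in> carrier G \<Longrightarrow> commW G x \<one> = \<one>"
  by (simp add: commW_def)

lemma (in group) integer_hom_commW: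
  assumes "h \<in> hom G integer_group" "x \<in> carrier G" "y \<in> carrier G"
  shows "h (commW G x y) = 0"
proof -
  interpret h: group_hom G integer_group h
    using assms(1) by (simp add: group_hom_def group_hom_axioms_def is_group)
  show ?thesis
    using assms(2,3) by (simp add: commW_def h.hom_mult h.hom_inv)
qed

lemma power_two_near_unique:
  fixes M \<mu> :: int
  assumes "3 * M < \<bar>\<mu>\<bar>" "\<bar>2 ^ k - \<mu>\<bar> \<le> M" "\<bar>2 ^ l - \<mu>\<bar> \<le> M"
  shows "k = l"
proof -
  have far: False if "k < l" "\<bar>2 ^ k - \<mu>\<bar> \<le> M" "\<bar>2 ^ l - \<mu>\<bar> \<le> M" for k l :: nat
  proof -
    have "(2::int) ^ Suc k \<le> 2 ^ l" using that(1) by (intro power_increasing) auto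
    then have "2 * 2 ^ k \<le> (2::int) ^ l" by simp
    moreover have "(2::int) ^ k > 0" by simp
    ultimately show False using assms(1) that(2,3) by linarith
  qed
  show ?thesis
  proof (rule ccontr)
    assume "k \<noteq> l"
    then consider "k < l" | "l < k" by linarith
    then show False using far assms(2,3) by cases blast+
  qed
qed

lemma power_two_add_odd_neq:
  assumes "i \<ge> 1" "j \<ge> 1"
  shows "(2::int) ^ j + (2 ^ i - 1) \<noteq> 2 ^ k"
proof (cases k)
  case 0
  have "(2::int) ^ i \<ge> 2" "(2::int) ^ j \<ge> 2"
    using assms by (metis one_le_numeral power_increasing power_one_right)+
  then show ?thesis using 0 by simp
next
  case (Suc k')
  have "even ((2::int) ^ i)" "even ((2::int) ^ j)" using assms by simp_all
  then obtain u v :: int where "2 ^ i = 2 * u" "2 ^ j = 2 * v" unfolding dvd_def by blast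
  moreover have "2 * v + (2 * u - 1) \<noteq> 2 * w" for w :: int by presburger
  ultimately show ?thesis using Suc by simp
qed

lemma sum_list_upt_Suc_eq_sum: "(\<Sum>j\<leftarrow>[1..<n+1]. f j) = (\<Sum>j\<in>{1..n}. f j)"
  unfolding sum_set_upt_conv_sum_list_nat[symmetric] set_upt by (simp add: atLeastLessThanSuc_atLeastAtMost)

subsection \<open>Wreath products with the integers\<close>

lemma wr_Z_simps:
  "carrier (wr_Z A) = {(f,k). \<forall>m. f m \<in> carrier A}"
  "(f1,k1) \<otimes>\<^bsub>wr_Z A\<^esub> (f2,k2) = (\<lambda>m. f1 m \<otimes>\<^bsub>A\<^esub> f2 (m+k1), k1+k2)"
  "\<one>\<^bsub>wr_Z A\<^esub> = (\<lambda>_. \<one>\<^bsub>A\<^esub>, 0)"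
  by (simp_all add: wr_Z_def)

lemma snd_wr_Z_mult: "snd (x \<otimes>\<^bsub>wr_Z A\<^esub> y) = snd x + snd y"
  by (cases x, cases y) (simp add: wr_Z_simps)

lemma wr_Z_group:
  assumes "group A" shows "group (wr_Z A)"
proof -
  interpret A: group A by fact
  show ?thesis
  proof (rule groupI)
    fix x y assume "x \<in> carrier (wr_Z A)" "y \<in> carrier (wr_Z A)"
    then show "x \<otimes>\<^bsub>wr_Z A\<^esub> y \<in> carrier (wr_Z A)"
      by (cases x, cases y) (auto simp: wr_Z_simps)
  next
    fix x y z assume "x \<in> carrier (wr_Z A)" "y \<in> carrier (wr_Z A)" "z \<in> carrier (wr_Z A)"
    then show "x \<otimes>\<^bsub>wr_Z A\<^esub> y \<otimes>\<^bsub>wr_Z A\<^esub> z = x \<otimes>\<^bsub>wr_Z A\<^esub> (y \<otimes>\<^bsub>wr_Z A\<^esub> z)"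
      by (cases x, cases y, cases z) (auto simp: wr_Z_simps A.m_assoc add.assoc)
  next
    fix x assume x: "x \<in> carrier (wr_Z A)"
    obtain f k where x_eq: "x = (f,k)" by (cases x)
    with x have "\<And>m. f m \<in> carrier A" by (simp add: wr_Z_simps)
    then show "\<exists>y\<in>carrier (wr_Z A). y \<otimes>\<^bsub>wr_Z A\<^esub> x = \<one>\<^bsub>wr_Z A\<^esub>"
      by (intro bexI[of _ "(\<lambda>m. inv\<^bsub>A\<^esub> f (m - k), - k)"]) (auto simp: x_eq wr_Z_simps)
  qed (auto simp: wr_Z_simps)
qed

lemma wr_Z_inv:
  assumes "group A" "\<And>m. f m \<in> carrier A"
  shows "inv\<^bsub>wr_Z A\<^esub> (f,k) = (\<lambda>m. inv\<^bsub>A\<^esub> f (m - k), - k)"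
proof -
  interpret A: group A by fact
  interpret W: group "wr_Z A" using assms(1) by (rule wr_Z_group)
  show ?thesis
    by (rule W.inv_equality) (auto simp: wr_Z_simps assms(2))
qed

lemma wr_Z_shift_mult:
  assumes "monoid A" "\<And>m. f m \<in> carrier A"
  shows "(\<lambda>_. \<one>\<^bsub>A\<^esub>, g) \<otimes>\<^bsub>wr_Z A\<^esub> (f,k) = (\<lambda>m. f (m + g), g + k)"
  using assms by (simp add: wr_Z_simps)

lemma wr_Z_base_mult: "(f,0) \<otimes>\<^bsub>wr_Z A\<^esub> (h,k) = (\<lambda>m. f m \<otimes>\<^bsub>A\<^esub> h m, k)"
  by (simp add: wr_Z_simps)

lemma wr_Z_foldr_base:
  "foldr (\<lambda>j acc. (h j, 0) \<otimes>\<^bsub>wr_Z A\<^esub> acc) L \<one>\<^bsub>wr_Z A\<^esub>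
     = (\<lambda>m. foldr (\<lambda>j acc. h j m \<otimes>\<^bsub>A\<^esub> acc) L \<one>\<^bsub>A\<^esub>, 0)"
  by (induction L) (auto simp: wr_Z_simps)

lemma wr_Z_int_pow_base:
  assumes "group A" "\<And>m. f m \<in> carrier A"
  shows "(f,0) [^]\<^bsub>wr_Z A\<^esub> (n::int) = (\<lambda>m. f m [^]\<^bsub>A\<^esub> n, 0)"
proof -
  interpret A: group A by fact
  have nat_pow: "(f,0) [^]\<^bsub>wr_Z A\<^esub> (k::nat) = (\<lambda>m. f m [^]\<^bsub>A\<^esub> k, 0)" for k
    by (induction k) (auto simp: wr_Z_simps assms(2))
  show ?thesis
  proof (cases "n < 0")
    case True
    have "(f,0) [^]\<^bsub>wr_Z A\<^esub> n = inv\<^bsub>wr_Z A\<^esub> ((f,0) [^]\<^bsub>wr_Z A\<^esub> nat (-n))"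
      using True by (simp only: int_pow_def2[of "wr_Z A"] if_True)
    also have "\<dots> = (\<lambda>m. inv\<^bsub>A\<^esub> (f m [^]\<^bsub>A\<^esub> nat (-n)), 0)"
      unfolding nat_pow by (subst wr_Z_inv[OF assms(1)]) (auto simp: assms(2))
    also have "\<dots> = (\<lambda>m. f m [^]\<^bsub>A\<^esub> n, 0)"
      using True by (simp only: int_pow_def2[of A] if_True)
    finally show ?thesis .
  qed (simp only: int_pow_def2 nat_pow if_False)
qed

lemma wr_Z_int_pow_shift:
  assumes "group A"
  shows "(\<lambda>_. \<one>\<^bsub>A\<^esub>, 1) [^]\<^bsub>wr_Z A\<^esub> (n::int) = (\<lambda>_. \<one>\<^bsub>A\<^esub>, n)"
proof -
  interpret A: group A by fact
  have nat_pow: "(\<lambda>_. \<one>\<^bsub>A\<^esub>, 1) [^]\<^bsub>wr_Z A\<^esub> (k::nat) = (\<lambda>_. \<one>\<^bsub>A\<^esub>, int k)" for k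
    by (induction k) (auto simp: wr_Z_simps)
  show ?thesis
  proof (cases "n < 0")
    case True
    have "(\<lambda>_. \<one>\<^bsub>A\<^esub>, 1) [^]\<^bsub>wr_Z A\<^esub> n = inv\<^bsub>wr_Z A\<^esub> (\<lambda>_. \<one>\<^bsub>A\<^esub>, int (nat (-n)))"
      using True by (simp only: int_pow_def2[of "wr_Z A"] if_True nat_pow)
    also have "\<dots> = (\<lambda>_. \<one>\<^bsub>A\<^esub>, n)"
      using True by (subst wr_Z_inv[OF assms]) auto
    finally show ?thesis .
  qed (simp only: int_pow_def2[of "wr_Z A"] if_False nat_pow, simp)
qed

lemma wr_Z_conj_shift:
  assumes "group A" "\<And>m. f m \<in> carrier A"
  shows "conjW (wr_Z A) (f,0) (\<lambda>_. \<one>\<^bsub>A\<^esub>, g) = (\<lambda>m. f (m + g), 0)"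
proof -
  interpret A: group A by fact
  show ?thesis
    using assms by (simp add: conjW_def wr_Z_inv wr_Z_simps)
qed

lemma wr_Z_comm_base:
  assumes "group A" "\<And>m. f m \<in> carrier A" "\<And>m. h m \<in> carrier A"
  shows "commW (wr_Z A) (f,0) (h,0) = (\<lambda>m. commW A (f m) (h m), 0)"
  using assms by (simp add: commW_def wr_Z_inv wr_Z_simps)

lemma wr_Z_word:
  assumes "group A" "\<And>m. f m \<in> carrier A"
  shows "(\<lambda>_. \<one>\<^bsub>A\<^esub>, g) \<otimes>\<^bsub>wr_Z A\<^esub>
      foldr (\<lambda>k acc. (\<lambda>m. f m [^]\<^bsub>A\<^esub> beta k, 0) \<otimes>\<^bsub>wr_Z A\<^esub> ((\<lambda>_. \<one>\<^bsub>A\<^esub>, alpha k) \<otimes>\<^bsub>wr_Z A\<^esub> acc))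
        [j..<m] \<one>\<^bsub>wr_Z A\<^esub>
    = (\<lambda>x. foldr (\<lambda>k acc. f (x + g + (\<Sum>i\<in>{j..<k}. alpha i)) [^]\<^bsub>A\<^esub> (beta k :: int) \<otimes>\<^bsub>A\<^esub> acc)
             [j..<m] \<one>\<^bsub>A\<^esub>,
       g + (\<Sum>i\<in>{j..<m}. alpha i))"
proof (induction "m - j" arbitrary: j g)
  case 0
  then show ?case using assms(1) by (simp add: wr_Z_simps group.is_monoid)
next
  case (Suc d)
  interpret A: group A by fact
  let ?R = "foldr (\<lambda>k acc. (\<lambda>m. f m [^]\<^bsub>A\<^esub> beta k, 0) \<otimes>\<^bsub>wr_Z A\<^esub> ((\<lambda>_. \<one>\<^bsub>A\<^esub>, alpha k) \<otimes>\<^bsub>wr_Z A\<^esub> acc))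
        [Suc j..<m] \<one>\<^bsub>wr_Z A\<^esub>"
  define tail where "tail x = foldr (\<lambda>k acc. f (x + (\<Sum>i\<in>{j..<k}. alpha i)) [^]\<^bsub>A\<^esub> beta k \<otimes>\<^bsub>A\<^esub> acc)
        [Suc j..<m] \<one>\<^bsub>A\<^esub>" for x
  have jm: "j < m" and upt: "[j..<m] = j # [Suc j..<m]"
    using Suc.hyps(2) by (simp_all add: upt_conv_Cons)
  have sum_split: "(\<Sum>i\<in>{j..<k}. alpha i) = alpha j + (\<Sum>i\<in>{Suc j..<k}. alpha i)" if "j < k" for k
    using that by (simp add: sum.atLeast_Suc_lessThan)
  have "(\<lambda>_. \<one>\<^bsub>A\<^esub>, alpha j) \<otimes>\<^bsub>wr_Z A\<^esub> ?R
      = (\<lambda>x. foldr (\<lambda>k acc. f (x + alpha j + (\<Sum>i\<in>{Suc j..<k}. alpha i)) [^]\<^bsub>A\<^esub> beta k \<otimes>\<^bsub>A\<^esub> acc)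
             [Suc j..<m] \<one>\<^bsub>A\<^esub>,
         alpha j + (\<Sum>i\<in>{Suc j..<m}. alpha i))"
    using Suc.hyps by simp
  also have "\<dots> = (tail, alpha j + (\<Sum>i\<in>{Suc j..<m}. alpha i))"
    unfolding tail_def by (auto intro!: foldr_cong simp: sum_split add.assoc)
  finally have tail: "(\<lambda>_. \<one>\<^bsub>A\<^esub>, alpha j) \<otimes>\<^bsub>wr_Z A\<^esub> ?R = (tail, alpha j + (\<Sum>i\<in>{Suc j..<m}. alpha i))" .
  moreover have "tail x \<in> carrier A" for x
    unfolding tail_def by (rule A.foldr_int_pow_closed) (rule assms(2))
  ultimately show ?case
    unfolding upt using jm
    by (simp add: tail wr_Z_base_mult wr_Z_shift_mult[OF A.is_monoid] assms(2) tail_def sum_split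
        add.assoc)
qed

definition embed_at_one :: "('a,'b) monoid_scheme \<Rightarrow> 'a \<Rightarrow> (int \<Rightarrow> 'a) \<times> int" where
  "embed_at_one A x = (\<lambda>\<mu>. if \<mu> = 1 then x else \<one>\<^bsub>A\<^esub>, 0)"

lemma embed_at_one_hom:
  assumes "monoid A" shows "embed_at_one A \<in> hom A (wr_Z A)"
  using assms by (intro homI) (auto simp: embed_at_one_def wr_Z_simps)

lemma embed_at_one_image_iff:
  "(F, g) \<in> embed_at_one A ` T \<longleftrightarrow> g = 0 \<and> (\<forall>\<mu>. \<mu> \<noteq> 1 \<longrightarrow> F \<mu> = \<one>\<^bsub>A\<^esub>) \<and> F 1 \<in> T"
proof
  assume "g = 0 \<and> (\<forall>\<mu>. \<mu> \<noteq> 1 \<longrightarrow> F \<mu> = \<one>\<^bsub>A\<^esub>) \<and> F 1 \<in> T"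
  then have "(F, g) = embed_at_one A (F 1)" "F 1 \<in> T"
    by (auto simp: embed_at_one_def)
  then show "(F, g) \<in> embed_at_one A ` T" by blast
qed (auto simp: embed_at_one_def)

subsection \<open>The groups \<open>K\<close> and \<open>G\<close>\<close>

locale two_generator_embedding =
  fixes H :: "('h,'x) monoid_scheme" and a :: "nat \<Rightarrow> 'h"
  assumes group_H: "group H" and generators_in_H: "\<forall>i\<ge>1. a i \<in> carrier H"
begin

abbreviation K where "K \<equiv> KK H a"
abbreviation W where "W \<equiv> wr_Z (KK H a)"
abbreviation G where "G \<equiv> GG H a"
definition cfun where "cfun = fst (cW H a)"

lemma subgroup_K: "subgroup (carrier K) (wr_Z H)"
proof -
  have "insert (zW H) {bW H a i | i. i \<ge> 1} \<subseteq> carrier (wr_Z H)"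
    using generators_in_H group.is_monoid[OF group_H] by (auto simp: wr_Z_simps zW_def bW_def)
  then show ?thesis
    unfolding KK_def by (simp add: group.generate_is_subgroup[OF wr_Z_group[OF group_H]])
qed

lemma group_K: "group K"
  using subgroup.subgroup_is_group[OF subgroup_K wr_Z_group[OF group_H]] by (simp add: KK_def)

lemma K_simps:
  "x \<otimes>\<^bsub>K\<^esub> y = x \<otimes>\<^bsub>wr_Z H\<^esub> y" "\<one>\<^bsub>K\<^esub> = \<one>\<^bsub>wr_Z H\<^esub>"
  by (simp_all add: KK_def)

lemma z_in_K: "zW H \<in> carrier K"
  unfolding KK_def by (simp add: generate.incl)

lemma b_in_K: "i \<ge> 1 \<Longrightarrow> bW H a i \<in> carrier K"
  unfolding KK_def by (auto intro: generate.incl)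

lemma cfun_one: "cfun 1 = zW H"
  by (simp add: cfun_def cW_def)

lemma cfun_power_two:
  assumes "i \<ge> 1" shows "cfun (2 ^ i) = bW H a i"
proof -
  have "(THE j. j \<ge> 1 \<and> (2::int) ^ i = 2 ^ j) = i"
    using assms power_inject_exp[of "2::int" i] by (intro the_equality) auto
  then show ?thesis using assms by (auto simp: cfun_def cW_def)
qed

lemma cfun_other: "k \<noteq> 1 \<Longrightarrow> \<not> (\<exists>i::nat. i \<ge> 1 \<and> k = 2 ^ i) \<Longrightarrow> cfun k = \<one>\<^bsub>K\<^esub>"
  unfolding cfun_def cW_def by auto

lemma cfun_cases:
  obtains "k = 1" "cfun k = zW H"
  | i where "i \<ge> 1" "k = 2 ^ i" "cfun k = bW H a i"
  | "k \<noteq> 1" "\<not> (\<exists>i::nat. i \<ge> 1 \<and> k = 2 ^ i)" "cfun k = \<one>\<^bsub>K\<^esub>"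
proof -
  consider "k = 1" | i :: nat where "i \<ge> 1" "k = 2 ^ i" | "k \<noteq> 1" "\<not> (\<exists>i::nat. i \<ge> 1 \<and> k = 2 ^ i)"
    by blast
  then show thesis
    by cases (use that cfun_one cfun_power_two cfun_other in simp_all)
qed

lemma cfun_in_K: "cfun k \<in> carrier K"
  using z_in_K b_in_K group.is_monoid[OF group_K] by (cases k rule: cfun_cases) auto

lemma c_eq: "cW H a = (cfun, 0)"
  by (simp add: cfun_def cW_def)

lemma s_eq: "sW H a = (\<lambda>_. \<one>\<^bsub>K\<^esub>, 1)"
  by (simp add: sW_def)

lemma group_W: "group W"
  by (rule wr_Z_group[OF group_K])

lemma subgroup_G: "subgroup (carrier G) W"
proof -
  have "{cW H a, sW H a} \<subseteq> carrier W"
    using cfun_in_K group.is_monoid[OF group_K] by (auto simp: c_eq s_eq wr_Z_simps)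
  then show ?thesis
    unfolding GG_def by (simp add: group.generate_is_subgroup[OF group_W])
qed

lemma G_eq: "G = W\<lparr>carrier := carrier G\<rparr>"
  by (simp add: GG_def)

lemma group_G: "group G"
  by (subst G_eq) (rule subgroup.subgroup_is_group[OF subgroup_G group_W])

lemma G_simps:
  "x \<otimes>\<^bsub>G\<^esub> y = x \<otimes>\<^bsub>W\<^esub> y" "\<one>\<^bsub>G\<^esub> = \<one>\<^bsub>W\<^esub>"
  by (simp_all add: GG_def)

lemma c_in_G: "cW H a \<in> carrier G" and s_in_G: "sW H a \<in> carrier G"
  unfolding GG_def by (simp_all add: generate.incl)

lemma G_int_pow: "x \<in> carrier G \<Longrightarrow> x [^]\<^bsub>G\<^esub> (n::int) = x [^]\<^bsub>W\<^esub> n"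
  by (subst G_eq) (simp add: group.int_pow_consistent[OF group_W subgroup_G])

lemma s_int_pow: "sW H a [^]\<^bsub>G\<^esub> (g::int) = (\<lambda>_. \<one>\<^bsub>K\<^esub>, g)"
  using G_int_pow[OF s_in_G] wr_Z_int_pow_shift[OF group_K] by (simp add: s_eq)

lemma c_int_pow: "cW H a [^]\<^bsub>G\<^esub> (b::int) = (\<lambda>x. cfun x [^]\<^bsub>K\<^esub> b, 0)"
  using G_int_pow[OF c_in_G] wr_Z_int_pow_base[OF group_K cfun_in_K] by (simp add: c_eq)

lemma conj_c_s_int_pow:
  "conjW G (cW H a) (sW H a [^]\<^bsub>G\<^esub> (g::int)) = (\<lambda>x. cfun (x + g), 0)"
proof -
  have "conjW G (cW H a) (sW H a [^]\<^bsub>G\<^esub> g) = conjW W (cW H a) (sW H a [^]\<^bsub>G\<^esub> g)"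
    by (subst G_eq, rule group.conjW_subgroup[OF group_W subgroup_G c_in_G])
      (rule group.int_pow_closed[OF group_G s_in_G])
  then show ?thesis
    by (simp add: s_int_pow c_eq wr_Z_conj_shift[OF group_K] cfun_in_K)
qed

lemma conj_c_s_int_pow_in_G: "conjW G (cW H a) (sW H a [^]\<^bsub>G\<^esub> (g::int)) \<in> carrier G"
proof -
  interpret G: group G by (rule group_G)
  show ?thesis
    unfolding conjW_def using c_in_G s_in_G by simp
qed

lemma conj_c_s_int_pow_int_pow:
  "conjW G (cW H a) (sW H a [^]\<^bsub>G\<^esub> (g::int)) [^]\<^bsub>G\<^esub> (b::int) = (\<lambda>x. cfun (x + g) [^]\<^bsub>K\<^esub> b, 0)"
  using G_int_pow[OF conj_c_s_int_pow_in_G] wr_Z_int_pow_base[OF group_K cfun_in_K]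
  by (simp add: conj_c_s_int_pow)

lemma FW_eq:
  "FW H a n alpha beta =
     (\<lambda>\<mu>. foldr (\<lambda>j acc. cfun (\<mu> + gammaW alpha j) [^]\<^bsub>K\<^esub> beta j \<otimes>\<^bsub>K\<^esub> acc) [1..<n+1] \<one>\<^bsub>K\<^esub>, 0)"
  unfolding FW_def conj_c_s_int_pow_int_pow G_simps wr_Z_foldr_base ..

lemma wordW_eq: "wordW H a n alpha beta = (fst (FW H a n alpha beta), \<Sum>i\<le>n. alpha i)"
proof -
  have gamma: "alpha 0 + (\<Sum>i\<in>{1..<k}. alpha i) = gammaW alpha k" if "k \<ge> 1" for k
    using that by (simp add: gammaW_def lessThan_atLeast0 sum.atLeast_Suc_lessThan)
  have "wordW H a n alpha beta =
      (\<lambda>x. foldr (\<lambda>k acc. cfun (x + alpha 0 + (\<Sum>i\<in>{1..<k}. alpha i)) [^]\<^bsub>K\<^esub> beta k \<otimes>\<^bsub>K\<^esub> acc)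
             [1..<n+1] \<one>\<^bsub>K\<^esub>,
       alpha 0 + (\<Sum>i\<in>{1..<n+1}. alpha i))"
    unfolding wordW_def s_int_pow c_int_pow G_simps by (rule wr_Z_word[OF group_K cfun_in_K])
  also have "\<dots> = (fst (FW H a n alpha beta), \<Sum>i\<le>n. alpha i)"
  proof -
    have "foldr (\<lambda>k acc. cfun (x + alpha 0 + (\<Sum>i\<in>{1..<k}. alpha i)) [^]\<^bsub>K\<^esub> beta k \<otimes>\<^bsub>K\<^esub> acc)
            [1..<n+1] \<one>\<^bsub>K\<^esub>
        = foldr (\<lambda>j acc. cfun (x + gammaW alpha j) [^]\<^bsub>K\<^esub> beta j \<otimes>\<^bsub>K\<^esub> acc) [1..<n+1] \<one>\<^bsub>K\<^esub>" for x
      by (rule foldr_cong) (auto simp: gamma[symmetric] add.assoc)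
    moreover have "alpha 0 + (\<Sum>i\<in>{1..<n+1}. alpha i) = (\<Sum>i\<le>n. alpha i)"
      using gamma[of "n+1"] by (simp add: gammaW_def lessThan_Suc_atMost)
    ultimately show ?thesis unfolding FW_eq by simp
  qed
  finally show ?thesis .
qed

subsection \<open>The image of \<open>\<phi>\<close>\<close>

lemma cfun_shift_support:
  assumes "i \<ge> 1" "\<mu> \<noteq> 1"
  shows "cfun \<mu> = \<one>\<^bsub>K\<^esub> \<or> cfun (\<mu> + (2 ^ i - 1)) = \<one>\<^bsub>K\<^esub>"
proof (cases \<mu> rule: cfun_cases)
  case (2 j)
  then have "\<mu> + (2 ^ i - 1) \<noteq> 2 ^ k" for k :: nat
    using power_two_add_odd_neq[OF assms(1)] by simp
  from this[of 0] this show ?thesis by (simp add: cfun_other)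
qed (use assms in simp_all)

lemma phi_generator_eq:
  assumes "i \<ge> 1"
  shows "commW G (cW H a) (conjW G (cW H a) (sW H a [^]\<^bsub>G\<^esub> ((2::int) ^ i - 1)))
       = embed_at_one K (commW K (zW H) (bW H a i))"
proof -
  interpret K: group K by (rule group_K)
  define m :: int where "m = 2 ^ i - 1"
  have "commW G (cW H a) (conjW G (cW H a) (sW H a [^]\<^bsub>G\<^esub> m))
      = commW W (cW H a) (conjW G (cW H a) (sW H a [^]\<^bsub>G\<^esub> m))"
    by (subst G_eq, rule group.commW_subgroup[OF group_W subgroup_G c_in_G conj_c_s_int_pow_in_G])
  also have "\<dots> = (\<lambda>x. commW K (cfun x) (cfun (x + m)), 0)"
    unfolding conj_c_s_int_pow unfolding c_eq by (simp add: wr_Z_comm_base[OF group_K] cfun_in_K)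
  also have "\<dots> = embed_at_one K (commW K (zW H) (bW H a i))"
  proof -
    have "commW K (cfun x) (cfun (x + m)) = (if x = 1 then commW K (zW H) (bW H a i) else \<one>\<^bsub>K\<^esub>)"
      for x
      using cfun_shift_support[OF assms, of x] cfun_in_K[of x] cfun_in_K[of "x + m"]
      by (auto simp: m_def cfun_one cfun_power_two[OF assms] K.commW_one_left K.commW_one_right)
    then show ?thesis by (simp add: embed_at_one_def)
  qed
  finally show ?thesis unfolding m_def .
qed

abbreviation zb_commutators where
  "zb_commutators \<equiv> generate K {commW K (zW H) (bW H a i) | i. i \<ge> 1}"

lemma image_eq_embed_zb_commutators:
  assumes hom: "\<phi> \<in> hom H G"
    and gen: "generate H {a i | i. i \<ge> 1} = carrier H"
    and phi_a: "\<forall>i\<ge>1. \<phi> (a i) = commW G (cW H a)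
                 (conjW G (cW H a) (sW H a [^]\<^bsub>G\<^esub> ((2::int) ^ i - 1)))"
  shows "\<phi> ` carrier H = embed_at_one K ` zb_commutators"
proof -
  let ?A = "{a i | i. i \<ge> 1}"
  let ?Z = "{commW K (zW H) (bW H a i) | i. i \<ge> 1}"
  interpret K: group K by (rule group_K)
  interpret \<phi>: group_hom H G \<phi>
    using group_H group_G hom by (simp add: group_hom_def group_hom_axioms_def)
  interpret e: group_hom K W "embed_at_one K"
    using group_K group_W embed_at_one_hom[OF K.is_monoid]
    by (simp add: group_hom_def group_hom_axioms_def)
  have A: "?A \<subseteq> carrier H" using generators_in_H by auto
  have Z: "?Z \<subseteq> carrier K" using z_in_K b_in_K by (auto simp: commW_def)
  have gens: "\<phi> ` ?A = embed_at_one K ` ?Z"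
  proof -
    have "(\<lambda>i. \<phi> (a i)) ` {i. i \<ge> 1} = (\<lambda>i. embed_at_one K (commW K (zW H) (bW H a i))) ` {i. i \<ge> 1}"
      by (rule image_cong) (simp_all add: phi_a phi_generator_eq)
    moreover have "\<phi> ` ?A = (\<lambda>i. \<phi> (a i)) ` {i. i \<ge> 1}" "?Z = (\<lambda>i. commW K (zW H) (bW H a i)) ` {i. i \<ge> 1}"
      by auto
    ultimately show ?thesis by (simp add: image_image)
  qed
  have "\<phi> ` ?A \<subseteq> carrier G" using A \<phi>.hom_closed by blast
  then have consistent: "generate G (\<phi> ` ?A) = generate W (\<phi> ` ?A)"
    by (subst G_eq) (rule group.generate_consistent[OF group_W _ subgroup_G])
  have "\<phi> ` carrier H = generate G (\<phi> ` ?A)"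
    using \<phi>.generate_img[OF A] gen by simp
  also have "\<dots> = generate W (embed_at_one K ` ?Z)"
    unfolding consistent by (simp only: gens)
  also have "\<dots> = embed_at_one K ` zb_commutators"
    by (rule e.generate_img[OF Z])
  finally show ?thesis .
qed

subsection \<open>The exponent of \<open>z\<close>\<close>

lemma snd_hom_integer_group: "snd \<in> hom K integer_group"
  by (rule homI) (simp_all add: K_simps snd_wr_Z_mult)

lemma snd_cfun: "snd (cfun \<mu>) = (if \<mu> = 1 then 1 else 0)"
proof (cases \<mu> rule: cfun_cases)
  case (2 i)
  then have "\<mu> \<noteq> 1" by simp
  with 2 show ?thesis by (simp add: bW_def)
qed (simp_all add: zW_def K_simps wr_Z_simps)

lemma snd_zb_commutators: "x \<in> zb_commutators \<Longrightarrow> snd x = 0"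
proof -
  interpret K: group K by (rule group_K)
  interpret h: group_hom K integer_group snd
    using snd_hom_integer_group by (simp add: group_hom_def group_hom_axioms_def K.is_group)
  have "zb_commutators \<subseteq> kernel K integer_group snd"
    using z_in_K b_in_K K.integer_hom_commW[OF snd_hom_integer_group]
    by (intro K.generate_subgroup_incl h.subgroup_kernel) (auto simp: kernel_def commW_def)
  then show "x \<in> zb_commutators \<Longrightarrow> snd x = 0" by (auto simp: kernel_def)
qed

lemma snd_FW:
  "snd (fst (FW H a n alpha beta) \<mu>) = (\<Sum>j\<in>{j\<in>{1..n}. \<mu> + gammaW alpha j = 1}. beta j)"
proof -
  interpret K: group K by (rule group_K)
  have "snd (fst (FW H a n alpha beta) \<mu>) = (\<Sum>j\<leftarrow>[1..<n+1]. beta j * snd (cfun (\<mu> + gammaW alpha j)))"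
    unfolding FW_eq fst_conv by (rule K.integer_hom_foldr_int_pow[OF snd_hom_integer_group cfun_in_K])
  also have "\<dots> = (\<Sum>j\<in>{1..n}. if \<mu> + gammaW alpha j = 1 then beta j else 0)"
    unfolding sum_list_upt_Suc_eq_sum snd_cfun by (simp add: if_distrib cong: if_cong)
  finally show ?thesis unfolding sum.inter_filter[OF finite_atLeastAtMost] .
qed

lemma FW_apply_single:
  assumes "x \<in> carrier K" "\<forall>j\<in>{1..n}. cfun (\<mu> + gammaW alpha j) = (if gammaW alpha j = g then x else \<one>\<^bsub>K\<^esub>)"
  shows "fst (FW H a n alpha beta) \<mu> = x [^]\<^bsub>K\<^esub> (\<Sum>j\<in>{j\<in>{1..n}. gammaW alpha j = g}. beta j)"
proof -
  interpret K: group K by (rule group_K)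
  have "fst (FW H a n alpha beta) \<mu>
      = foldr (\<lambda>j acc. (if gammaW alpha j = g then x else \<one>\<^bsub>K\<^esub>) [^]\<^bsub>K\<^esub> beta j \<otimes>\<^bsub>K\<^esub> acc) [1..<n+1] \<one>\<^bsub>K\<^esub>"
    unfolding FW_eq fst_conv using assms(2) by (intro foldr_cong) auto
  also have "\<dots> = x [^]\<^bsub>K\<^esub> (\<Sum>j\<in>{1..n}. if gammaW alpha j = g then beta j else 0)"
    unfolding K.foldr_int_pow_single[OF assms(1)] sum_list_upt_Suc_eq_sum ..
  finally show ?thesis unfolding sum.inter_filter[OF finite_atLeastAtMost] .
qed

subsection \<open>Vanishing far from the origin\<close>

lemma far_cfun_single:
  fixes M \<mu> :: int
  assumes far: "3 * M < \<bar>\<mu>\<bar>" "\<mu> \<noteq> 1" and bound: "\<forall>j\<in>{1..n}. \<bar>gammaW alpha j\<bar> \<le> M"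
  obtains g x where "x \<in> carrier K"
    "\<forall>j\<in>{1..n}. cfun (\<mu> + gammaW alpha j) = (if gammaW alpha j = g then x else \<one>\<^bsub>K\<^esub>)"
    "x = \<one>\<^bsub>K\<^esub> \<or> (\<exists>i\<in>{1..n}. gammaW alpha i = g)"
proof (cases "\<exists>i\<in>{1..n}. \<exists>k::nat. k \<ge> 1 \<and> \<mu> + gammaW alpha i = 2 ^ k")
  case True
  then obtain i and k :: nat where i: "i \<in> {1..n}" "k \<ge> 1" "\<mu> + gammaW alpha i = 2 ^ k"
    by blast
  have "cfun (\<mu> + gammaW alpha j) = (if gammaW alpha j = gammaW alpha i then bW H a k else \<one>\<^bsub>K\<^esub>)"
    if j: "j \<in> {1..n}" for j
  proof (cases "gammaW alpha j = gammaW alpha i")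
    case True
    with i show ?thesis by (simp add: cfun_power_two)
  next
    case False
    have "\<mu> + gammaW alpha j \<noteq> 2 ^ l" for l :: nat
    proof
      assume l: "\<mu> + gammaW alpha j = 2 ^ l"
      have "2 ^ k - \<mu> = gammaW alpha i" "2 ^ l - \<mu> = gammaW alpha j"
        using i(3) l by linarith+
      then have "\<bar>2 ^ k - \<mu>\<bar> \<le> M" "\<bar>2 ^ l - \<mu>\<bar> \<le> M"
        using bound i(1) j by simp_all
      then have "l = k" using power_two_near_unique[OF far(1)] by blast
      with False i(3) l show False by simp
    qed
    from this[of 0] this show ?thesis using False by (simp add: cfun_other)
  qed
  with i(1,2) b_in_K that show thesis by blast
next
  case False
  have "\<mu> + gammaW alpha j \<noteq> 1" if "j \<in> {1..n}" for j
    using bound that far by fastforce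
  with False have "\<forall>j\<in>{1..n}. cfun (\<mu> + gammaW alpha j) = \<one>\<^bsub>K\<^esub>"
    by (auto intro: cfun_other)
  then show thesis
    using that[of "\<one>\<^bsub>K\<^esub>"] group.is_monoid[OF group_K] by simp
qed

lemma FW_far_trivial:
  assumes blocks: "\<forall>i\<in>{1..n}. (\<Sum>j\<in>{j\<in>{1..n}. gammaW alpha j = gammaW alpha i}. beta j) = 0"
    and far: "3 * Max ((\<lambda>j. \<bar>gammaW alpha j\<bar>) ` {1..n}) < \<bar>\<mu>\<bar>" "\<mu> \<noteq> 1"
  shows "fst (FW H a n alpha beta) \<mu> = \<one>\<^bsub>K\<^esub>"
proof -
  interpret K: group K by (rule group_K)
  have bound: "\<forall>j\<in>{1..n}. \<bar>gammaW alpha j\<bar> \<le> Max ((\<lambda>j. \<bar>gammaW alpha j\<bar>) ` {1..n})"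
    by (intro ballI Max_ge) auto
  obtain g x where x: "x \<in> carrier K"
    and single: "\<forall>j\<in>{1..n}. cfun (\<mu> + gammaW alpha j) = (if gammaW alpha j = g then x else \<one>\<^bsub>K\<^esub>)"
    and trivial: "x = \<one>\<^bsub>K\<^esub> \<or> (\<exists>i\<in>{1..n}. gammaW alpha i = g)"
    by (rule far_cfun_single[OF far bound])
  have "fst (FW H a n alpha beta) \<mu> = x [^]\<^bsub>K\<^esub> (\<Sum>j\<in>{j\<in>{1..n}. gammaW alpha j = g}. beta j)"
    by (rule FW_apply_single[OF x single])
  moreover from trivial blocks
  have "x = \<one>\<^bsub>K\<^esub> \<or> (\<Sum>j\<in>{j\<in>{1..n}. gammaW alpha j = g}. beta j) = 0"
    by blast
  ultimately show ?thesis by (auto simp: K.int_pow_one)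
qed

lemma block_sums_zero:
  assumes "\<forall>\<mu>. \<mu> \<noteq> 1 \<longrightarrow> fst (FW H a n alpha beta) \<mu> = \<one>\<^bsub>K\<^esub>"
    and "fst (FW H a n alpha beta) 1 \<in> zb_commutators"
  shows "(\<Sum>j\<in>{j\<in>{1..n}. gammaW alpha j = gammaW alpha i}. beta j) = 0"
proof -
  have "snd (fst (FW H a n alpha beta) (1 - gammaW alpha i)) = 0"
  proof (cases "gammaW alpha i = 0")
    case True
    then show ?thesis using assms(2) snd_zb_commutators by simp
  next
    case False
    then show ?thesis using assms(1) by (simp add: K_simps wr_Z_simps)
  qed
  then show ?thesis by (simp add: snd_FW)
qed

lemma FW_trivial_off_one_iff:
  assumes "fst (FW H a n alpha beta) 1 \<in> zb_commutators"
  shows "(\<forall>\<mu>. \<mu> \<noteq> 1 \<longrightarrow> fst (FW H a n alpha beta) \<mu> = \<one>\<^bsub>K\<^esub>) \<longleftrightarrow>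
    (\<forall>i\<in>{1..n}. (\<Sum>j\<in>{j\<in>{1..n}. gammaW alpha j = gammaW alpha i}. beta j) = 0)
     \<and> (\<forall>\<mu>::int. \<mu> \<noteq> 1 \<and> \<bar>\<mu>\<bar> \<le> 3 * Max ((\<lambda>j. \<bar>gammaW alpha j\<bar>) ` {1..n})
           \<longrightarrow> fst (FW H a n alpha beta) \<mu> = \<one>\<^bsub>K\<^esub>)"
proof (intro iffI conjI allI impI ballI)
  fix i assume "\<forall>\<mu>. \<mu> \<noteq> 1 \<longrightarrow> fst (FW H a n alpha beta) \<mu> = \<one>\<^bsub>K\<^esub>"
  then show "(\<Sum>j\<in>{j\<in>{1..n}. gammaW alpha j = gammaW alpha i}. beta j) = 0"
    by (rule block_sums_zero[OF _ assms])
next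
  fix \<mu> :: int
  assume "(\<forall>i\<in>{1..n}. (\<Sum>j\<in>{j\<in>{1..n}. gammaW alpha j = gammaW alpha i}. beta j) = 0)
     \<and> (\<forall>\<mu>::int. \<mu> \<noteq> 1 \<and> \<bar>\<mu>\<bar> \<le> 3 * Max ((\<lambda>j. \<bar>gammaW alpha j\<bar>) ` {1..n})
           \<longrightarrow> fst (FW H a n alpha beta) \<mu> = \<one>\<^bsub>K\<^esub>)"
    and "\<mu> \<noteq> 1"
  then show "fst (FW H a n alpha beta) \<mu> = \<one>\<^bsub>K\<^esub>"
    using FW_far_trivial[where \<mu>=\<mu>] by (cases "\<bar>\<mu>\<bar> \<le> 3 * Max ((\<lambda>j. \<bar>gammaW alpha j\<bar>) ` {1..n})") auto
qed auto

end

theorem lemma6: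
  fixes H :: "('h,'x) monoid_scheme" and a :: "nat \<Rightarrow> 'h"
    and \<phi> :: "'h \<Rightarrow> (int \<Rightarrow> (int \<Rightarrow> 'h) \<times> int) \<times> int"
    and n :: nat and alpha beta :: "nat \<Rightarrow> int"
  assumes "group H"
    and "\<forall>i\<ge>1. a i \<in> carrier H"
    and "generate H {a i | i. i \<ge> 1} = carrier H"
    and "\<phi> \<in> hom H (GG H a)"
    and "\<forall>i\<ge>1. \<phi> (a i) = commW (GG H a) (cW H a)
                 (conjW (GG H a) (cW H a) (sW H a [^]\<^bsub>GG H a\<^esub> ((2::int) ^ i - 1)))"
    and "n \<ge> 1"
    and "\<forall>i. 0 < i \<and> i < n \<longrightarrow> alpha i \<noteq> 0"
    and "\<forall>j. 1 \<le> j \<and> j \<le> n \<longrightarrow> beta j \<noteq> 0"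
  shows "wordW H a n alpha beta \<in> \<phi> ` carrier H \<longleftrightarrow>
    ((\<Sum>i\<le>n. alpha i) = 0
     \<and> (\<forall>i\<in>{1..n}. (\<Sum>j\<in>{j\<in>{1..n}. gammaW alpha j = gammaW alpha i}. beta j) = 0)
     \<and> (\<forall>\<mu>::int. \<mu> \<noteq> 1 \<and> \<bar>\<mu>\<bar> \<le> 3 * Max ((\<lambda>j. \<bar>gammaW alpha j\<bar>) ` {1..n})
           \<longrightarrow> fst (FW H a n alpha beta) \<mu> = \<one>\<^bsub>KK H a\<^esub>)
     \<and> fst (FW H a n alpha beta) 1
         \<in> generate (KK H a) {commW (KK H a) (zW H) (bW H a i) | i. i \<ge> 1})"
proof -
  interpret two_generator_embedding H a
    using assms(1,2) by (rule two_generator_embedding.intro)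
  have "wordW H a n alpha beta \<in> \<phi> ` carrier H \<longleftrightarrow>
      (\<Sum>i\<le>n. alpha i) = 0
      \<and> (\<forall>\<mu>. \<mu> \<noteq> 1 \<longrightarrow> fst (FW H a n alpha beta) \<mu> = \<one>\<^bsub>K\<^esub>)
      \<and> fst (FW H a n alpha beta) 1 \<in> zb_commutators"
    unfolding image_eq_embed_zb_commutators[OF assms(4,3,5)] wordW_eq
    by (rule embed_at_one_image_iff)
  with FW_trivial_off_one_iff show ?thesis by blast
qed

end
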